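(* Let $\mathcal V=\{1,\dots,V\}$ be a vocabulary, $L\ge 1$, and let $P$ be a probability distribution on $\mathcal V^L$. Let $Q_\theta$ be an autoregressive model on $\mathcal V^L$ given by a logit map $F_\theta$, i.e. $Q_\theta(x_l\mid \mathbf x_{<l})=\mathrm{softmax}(F_\theta(\mathbf x_{<l}))_{x_l}$, and for a temperature $t>0$ let $Q^t_\theta(\mathbf x)=\prod_{l=1}^L \mathrm{softmax}(F_\theta(\mathbf x_{<l})/t)_{x_l}$. Let $$Z=\max_{\mathbf x\in\mathcal V^L}\ \max_{l\in\{1,\dots,L\}}\ \max_{i,j\in\mathcal V}\big(F_\theta(\mathbf x_{<l})_i-F_\theta(\mathbf x_{<l})_j\big).$$ Then for every temperature $t>0$ and every $\lambda\in(0,\infty)$, $$\alpha_\lambda(P\Vert Q^t_\theta)\le \frac{|\mathrm{Supp}(P)|}{V^L}e^{ZL/t}\quad\text{and}\quad \beta_\lambda(P\Vert Q^t_\theta)\le \frac1\lambda\,\frac{|\mathrm{Supp}(P)|}{V^L}e^{ZL/t}.$$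
   Context: For distributions $P,Q$ on a finite set $\mathcal X$ and $\lambda\in(0,\infty)$, the PR-curve quantities are $\alpha_\lambda(P\Vert Q)=\sum_{\mathbf x\in\mathcal X}\min(\lambda P(\mathbf x),Q(\mathbf x))$ (Precision at trade-off $\lambda$) and $\beta_\lambda(P\Vert Q)=\sum_{\mathbf x\in\mathcal X}\min(P(\mathbf x),Q(\mathbf x)/\lambda)$ (Recall at trade-off $\lambda$). $\mathrm{Supp}(P)$ is the set of sequences with positive $P$-probability, $\mathbf x_{<l}=(x_1,\dots,x_{l-1})$ (empty for $l=1$), and $F_\theta(\mathbf x_{<l})\in\mathbb R^V$ is the logit vector with entries $F_\theta(\mathbf x_{<l})_i$. *)

theory Defs
  imports Complex_Main
begin

definition seqs :: "nat \<Rightarrow> nat \<Rightarrow> nat list set" where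
  "seqs V L = {xs. length xs = L \<and> set xs \<subseteq> {1..V}}"

definition softmax :: "nat \<Rightarrow> (nat \<Rightarrow> real) \<Rightarrow> nat \<Rightarrow> real" where
  "softmax V f i = exp (f i) / (\<Sum>j\<in>{1..V}. exp (f j))"

text \<open>Temperature-scaled autoregressive model: prefix x_{<l} = take (l-1) xs,
  token x_l = xs ! (l-1).\<close>
definition Qtemp :: "nat \<Rightarrow> nat \<Rightarrow> (nat list \<Rightarrow> nat \<Rightarrow> real) \<Rightarrow> real \<Rightarrow> nat list \<Rightarrow> real" where
  "Qtemp V L F t xs = (\<Prod>l\<in>{1..L}. softmax V (\<lambda>i. F (take (l - 1) xs) i / t) (xs ! (l - 1)))"

definition PR_alpha :: "'a set \<Rightarrow> real \<Rightarrow> ('a \<Rightarrow> real) \<Rightarrow> ('a \<Rightarrow> real) \<Rightarrow> real" where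
  "PR_alpha X lam P Q = (\<Sum>x\<in>X. min (lam * P x) (Q x))"

definition PR_beta :: "'a set \<Rightarrow> real \<Rightarrow> ('a \<Rightarrow> real) \<Rightarrow> ('a \<Rightarrow> real) \<Rightarrow> real" where
  "PR_beta X lam P Q = (\<Sum>x\<in>X. min (P x) (Q x / lam))"

definition Supp :: "'a set \<Rightarrow> ('a \<Rightarrow> real) \<Rightarrow> 'a set" where
  "Supp X P = {x\<in>X. P x > 0}"

definition logit_gap :: "nat \<Rightarrow> nat \<Rightarrow> (nat list \<Rightarrow> nat \<Rightarrow> real) \<Rightarrow> real" where
  "logit_gap V L F = Max {F (take (l - 1) xs) i - F (take (l - 1) xs) j | xs l i j.
      xs \<in> seqs V L \<and> l \<in> {1..L} \<and> i \<in> {1..V} \<and> j \<in> {1..V}}"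

end

theory Submission
  imports Defs
begin

text \<open>Every logit differs from every other one at the same prefix by at most \<open>Z\<close>, so after
  scaling by \<open>1/t\<close> each of the \<open>V\<close> terms of a softmax denominator is at least
  \<open>exp (-Z/t)\<close> times the numerator; hence every conditional probability of \<open>Q\<^sup>t\<close> is at most
  \<open>e\<^bsup>Z/t\<^esup>/V\<close> and every sequence has probability at most \<open>e\<^bsup>ZL/t\<^esup>/V\<^sup>L\<close>.
  Both \<open>\<alpha>\<^sub>\<lambda>\<close> and \<open>\<lambda>\<beta>\<^sub>\<lambda>\<close> are sums of terms \<open>min (\<lambda>P x) (Q x)\<close>, which vanish off the support
  of \<open>P\<close> and are bounded by \<open>Q x\<close> on it.\<close>

lemma finite_seqs: "finite (seqs V L)"
proof -
  have "seqs V L = {xs. set xs \<subseteq> {1..V} \<and> length xs = L}"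
    unfolding seqs_def by auto
  then show ?thesis
    using finite_lists_length_eq[of "{1..V}" L] by simp
qed

lemma logit_gap_ge:
  assumes "xs \<in> seqs V L" "l \<in> {1..L}" "i \<in> {1..V}" "j \<in> {1..V}"
  shows "F (take (l - 1) xs) i - F (take (l - 1) xs) j \<le> logit_gap V L F"
proof -
  let ?gap = "\<lambda>(xs, l, i, j). F (take (l - 1) xs) i - F (take (l - 1) xs) j"
  let ?S = "{F (take (l - 1) xs) i - F (take (l - 1) xs) j | xs l i j.
      xs \<in> seqs V L \<and> l \<in> {1..L} \<and> i \<in> {1..V} \<and> j \<in> {1..V}}"
  have "?S \<subseteq> ?gap ` (seqs V L \<times> {1..L} \<times> {1..V} \<times> {1..V})"
    by (auto simp: image_iff) fastforce
  then have "finite ?S"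
    by (rule finite_subset) (simp add: finite_seqs)
  moreover have "F (take (l - 1) xs) i - F (take (l - 1) xs) j \<in> ?S"
    using assms by blast
  ultimately show ?thesis
    unfolding logit_gap_def by (rule Max_ge)
qed

lemma softmax_nonneg: "0 \<le> softmax V g i"
  unfolding softmax_def by (simp add: sum_nonneg)

lemma softmax_le_exp_gap:
  assumes i: "i \<in> {1..V}" and gap: "\<forall>j\<in>{1..V}. g i - g j \<le> Z"
  shows "softmax V g i \<le> exp Z / real V"
proof -
  have "V \<ge> 1"
    using i by simp
  have "(\<Sum>j\<in>{1..V}. exp (g i - Z)) \<le> (\<Sum>j\<in>{1..V}. exp (g j))"
  proof (intro sum_mono)
    fix j assume "j \<in> {1..V}"
    then have "g i - Z \<le> g j"
      using gap by fastforce
    then show "exp (g i - Z) \<le> exp (g j)"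
      by simp
  qed
  then have denom: "real V * exp (g i - Z) \<le> (\<Sum>j\<in>{1..V}. exp (g j))"
    by simp
  have pos: "0 < real V * exp (g i - Z)"
    using \<open>V \<ge> 1\<close> by simp
  have "softmax V g i \<le> exp (g i) / (real V * exp (g i - Z))"
    unfolding softmax_def using denom pos order_less_le_trans[OF pos denom]
    by (intro divide_left_mono) simp_all
  also have "\<dots> = exp Z / real V"
    by (simp add: exp_diff)
  finally show ?thesis .
qed

lemma Qtemp_le:
  assumes xs: "xs \<in> seqs V L" and "t > 0"
  shows "Qtemp V L F t xs \<le> exp (logit_gap V L F * real L / t) / real V ^ L"
proof -
  let ?Z = "logit_gap V L F"
  have factor_le: "softmax V (\<lambda>i. F (take (l - 1) xs) i / t) (xs ! (l - 1)) \<le> exp (?Z / t) / real V"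
    if l: "l \<in> {1..L}" for l
  proof -
    have "xs ! (l - 1) \<in> set xs"
      using xs l unfolding seqs_def by auto
    then have "xs ! (l - 1) \<in> {1..V}"
      using xs unfolding seqs_def by blast
    moreover have "F (take (l - 1) xs) (xs ! (l - 1)) / t - F (take (l - 1) xs) j / t \<le> ?Z / t"
      if "j \<in> {1..V}" for j
      using logit_gap_ge[OF xs l \<open>xs ! (l - 1) \<in> {1..V}\<close> that] \<open>t > 0\<close>
      by (simp add: diff_divide_distrib[symmetric] divide_right_mono)
    ultimately show ?thesis
      by (intro softmax_le_exp_gap) auto
  qed
  have "Qtemp V L F t xs \<le> (\<Prod>l\<in>{1..L}. exp (?Z / t) / real V)"
    unfolding Qtemp_def using softmax_nonneg factor_le by (intro prod_mono) blast
  also have "\<dots> = exp (?Z * real L / t) / real V ^ L"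
    by (simp add: power_divide exp_of_nat_mult[symmetric] mult.commute)
  finally show ?thesis .
qed

lemma PR_alpha_le_card_Supp:
  assumes "finite X" and P_nonneg: "\<forall>x\<in>X. P x \<ge> 0" and Q_le: "\<forall>x\<in>X. Q x \<le> B"
  shows "PR_alpha X lam P Q \<le> real (card (Supp X P)) * B"
proof -
  let ?S = "Supp X P"
  have "?S \<subseteq> X"
    unfolding Supp_def by auto
  have "PR_alpha X lam P Q = (\<Sum>x\<in>?S. min (lam * P x) (Q x)) + (\<Sum>x\<in>X - ?S. min (lam * P x) (Q x))"
    unfolding PR_alpha_def using sum.subset_diff[OF \<open>?S \<subseteq> X\<close> \<open>finite X\<close>] by (simp add: add.commute)
  also have "(\<Sum>x\<in>X - ?S. min (lam * P x) (Q x)) \<le> 0"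
    using P_nonneg by (intro sum_nonpos) (auto simp: Supp_def)
  also have "(\<Sum>x\<in>?S. min (lam * P x) (Q x)) \<le> (\<Sum>x\<in>?S. B)"
    using Q_le \<open>?S \<subseteq> X\<close> by (intro sum_mono) force
  finally show ?thesis
    by simp
qed

lemma PR_beta_eq_PR_alpha_div:
  assumes "lam > 0"
  shows "PR_beta X lam P Q = PR_alpha X lam P Q / lam"
proof -
  have "min (P x) (Q x / lam) = min (lam * P x) (Q x) / lam" for x
    using assms by (simp add: min_def field_simps)
  then show ?thesis
    unfolding PR_alpha_def PR_beta_def by (simp add: sum_divide_distrib)
qed

theorem theorem4p2:
  fixes V L :: nat and P :: "nat list \<Rightarrow> real" and F :: "nat list \<Rightarrow> nat \<Rightarrow> real"
    and t lam :: real
  assumes "L \<ge> 1"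
    and "\<forall>x\<in>seqs V L. P x \<ge> 0"
    and "(\<Sum>x\<in>seqs V L. P x) = 1"
    and "t > 0" and "lam > 0"
  shows "PR_alpha (seqs V L) lam P (Qtemp V L F t)
           \<le> real (card (Supp (seqs V L) P)) / real V ^ L * exp (logit_gap V L F * real L / t)
       \<and> PR_beta (seqs V L) lam P (Qtemp V L F t)
           \<le> (1 / lam) * (real (card (Supp (seqs V L) P)) / real V ^ L) * exp (logit_gap V L F * real L / t)"
proof -
  let ?B = "exp (logit_gap V L F * real L / t) / real V ^ L"
  have alpha: "PR_alpha (seqs V L) lam P (Qtemp V L F t) \<le> real (card (Supp (seqs V L) P)) * ?B"
    using finite_seqs assms(2) Qtemp_le[OF _ assms(4)] by (intro PR_alpha_le_card_Supp) auto
  then have "PR_beta (seqs V L) lam P (Qtemp V L F t) \<le> real (card (Supp (seqs V L) P)) * ?B / lam"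
    unfolding PR_beta_eq_PR_alpha_div[OF assms(5)] using assms(5) by (intro divide_right_mono) simp_all
  with alpha show ?thesis
    by (simp add: field_simps)
qed

end
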